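(* Let $\mathcal{T}$ be a tiling of $\mathbb{R}^d$ that is repetitive, has finite local complexity and has the Meyer property. Then for every finite $\mathcal{T}$-legal patch $\mathcal{P}$ and every $n>0$ there is $z\in\mathbb{R}^d\setminus\{0\}$ such that $\bigcup_{k=1}^n(\mathcal{P}+kz)$ is $\mathcal{T}$-legal. Moreover, for any unit vector $u$ and any $\delta>0$, $z$ can be chosen with $\|z/\|z\|-u\|<\delta$.
   Context: A tile in $\mathbb{R}^d$ is a compact set equal to the closure of its interior, possibly labeled from a finite set. A patch is a set of tiles with pairwise disjoint interiors; a tiling is a patch whose support is $\mathbb{R}^d$. A patch $\mathcal{P}$ is $\mathcal{T}$-legal if $\mathcal{P}+y\subset\mathcal{T}$ for some $y$. $\mathcal{P}\sqcap S=\{T\in\mathcal{P}:\operatorname{supp}T\cap S\neq\emptyset\}$. $\mathcal{T}$ has finite local complexity if for each compact $K$ the set $\{\mathcal{T}\sqcap(K+x)\}_x$ is finite up to translation, and is repetitive if for every finite $\mathcal{T}$-legal patch $\mathcal{P}$ there is $R>0$ such that every ball of radius $R$ contains the support of some translate $\mathcal{P}+x\subset\mathcal{T}$. $\mathcal{T}$ has the Meyer property if one can choose a point in the support of each tile, with the same relative position for tiles that are translates of each other, such that the resulting set $D$ is a Meyer set: a Delone set with $((D-D)-(D-D))\cap U=\{0\}$ for some neighbourhood $U$ of $0$. *)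

theory Defs
  imports "HOL-Analysis.Analysis"
begin

type_synonym ('a, 'l) tile = "'a set \<times> 'l"

definition supp :: "('a, 'l) tile \<Rightarrow> 'a set" where
  "supp t = fst t"

definition is_tile :: "('a::euclidean_space, 'l) tile \<Rightarrow> bool" where
  "is_tile t \<longleftrightarrow> compact (supp t) \<and> supp t = closure (interior (supp t))"

definition is_patch :: "('a::euclidean_space, 'l) tile set \<Rightarrow> bool" where
  "is_patch P \<longleftrightarrow> (\<forall>t\<in>P. is_tile t) \<and>
     (\<forall>t\<in>P. \<forall>t'\<in>P. t \<noteq> t' \<longrightarrow> interior (supp t) \<inter> interior (supp t') = {})"

definition patch_supp :: "('a, 'l) tile set \<Rightarrow> 'a set" where
  "patch_supp P = (\<Union>t\<in>P. supp t)"

definition is_tiling :: "('a::euclidean_space, 'l) tile set \<Rightarrow> bool" where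
  "is_tiling T \<longleftrightarrow> is_patch T \<and> patch_supp T = UNIV"

definition tile_transl :: "('a::euclidean_space, 'l) tile \<Rightarrow> 'a \<Rightarrow> ('a, 'l) tile" where
  "tile_transl t y = ((\<lambda>x. x + y) ` fst t, snd t)"

definition patch_transl :: "('a::euclidean_space, 'l) tile set \<Rightarrow> 'a \<Rightarrow> ('a, 'l) tile set" where
  "patch_transl P y = (\<lambda>t. tile_transl t y) ` P"

definition legal :: "('a::euclidean_space, 'l) tile set \<Rightarrow> ('a, 'l) tile set \<Rightarrow> bool" where
  "legal T P \<longleftrightarrow> (\<exists>y. patch_transl P y \<subseteq> T)"

definition patch_meet :: "('a, 'l) tile set \<Rightarrow> 'a set \<Rightarrow> ('a, 'l) tile set" where
  "patch_meet P S = {t\<in>P. supp t \<inter> S \<noteq> {}}"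

definition FLC :: "('a::euclidean_space, 'l) tile set \<Rightarrow> bool" where
  "FLC T \<longleftrightarrow> (\<forall>K. compact K \<longrightarrow>
     (\<exists>F. finite F \<and> (\<forall>x. \<exists>Q\<in>F. \<exists>y. patch_meet T ((\<lambda>k. k + x) ` K) = patch_transl Q y)))"

definition repetitive :: "('a::euclidean_space, 'l) tile set \<Rightarrow> bool" where
  "repetitive T \<longleftrightarrow> (\<forall>P. finite P \<and> legal T P \<longrightarrow>
     (\<exists>R>0. \<forall>c. \<exists>x. patch_transl P x \<subseteq> T \<and> patch_supp (patch_transl P x) \<subseteq> ball c R))"

definition delone :: "'a::euclidean_space set \<Rightarrow> bool" where
  "delone D \<longleftrightarrow> (\<exists>r>0. \<forall>x\<in>D. \<forall>y\<in>D. x \<noteq> y \<longrightarrow> dist x y \<ge> r) \<and>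
                 (\<exists>R>0. \<forall>x. \<exists>y\<in>D. dist x y \<le> R)"

definition meyer_set :: "'a::euclidean_space set \<Rightarrow> bool" where
  "meyer_set D \<longleftrightarrow> delone D \<and>
     (\<exists>U. open U \<and> 0 \<in> U \<and> {(a - b) - (c - e) | a b c e. a \<in> D \<and> b \<in> D \<and> c \<in> D \<and> e \<in> D} \<inter> U = {0})"

definition meyer_property :: "('a::euclidean_space, 'l) tile set \<Rightarrow> bool" where
  "meyer_property T \<longleftrightarrow> (\<exists>c. (\<forall>t\<in>T. c t \<in> supp t) \<and>
     (\<forall>t\<in>T. \<forall>t'\<in>T. \<forall>y. t' = tile_transl t y \<longrightarrow> c t' = c t + y) \<and>
     meyer_set (c ` T))"

end

theory Submission
  imports Defs
begin

(* Let Y be the set of translations y with P + y inside T. Repetitivity makes Y relatively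
   dense, and the Meyer property of the control points makes Y rigid: a difference of two
   differences of points of Y is either 0 or of norm at least some r > 0. Choose points of Y
   within distance R of i L u for i = 0, 1, 2, ...; their errors lie in a compact ball, so van
   der Waerden's theorem, applied to a colouring by a fine finite net, yields indices a + j d
   whose errors agree up to r/4. Rigidity then forces the chosen points to form an exact
   arithmetic progression, whose step is within r/4 of d L u and hence, for large L, points in
   a direction close to u. *)

section \<open>Van der Waerden's theorem\<close>

(* The progression a, a + d, ..., a + k d has k + 1 terms. The bound d < N matters only for
   k = 0, where it keeps the new focus built in focus_bound_Suc inside {..<N}. *)
definition has_mono_progression :: "(nat \<Rightarrow> 'c) \<Rightarrow> nat \<Rightarrow> nat \<Rightarrow> bool" where
  "has_mono_progression c k N \<longleftrightarrow>
     (\<exists>a d. 0 < d \<and> d < N \<and> a + k * d < N \<and> (\<forall>j\<le>k. c (a + j * d) = c a))"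

definition vdw_bound :: "nat \<Rightarrow> 'c set \<Rightarrow> nat \<Rightarrow> bool" where
  "vdw_bound k C N \<longleftrightarrow> (\<forall>c. c ` {..<N} \<subseteq> C \<longrightarrow> has_mono_progression c k N)"

lemma has_mono_progression_shift:
  assumes "has_mono_progression (\<lambda>i. c (m + i)) k M" and "m + M \<le> N"
  shows "has_mono_progression c k N"
proof -
  obtain a d where "0 < d" "d < M" "a + k * d < M" "\<forall>j\<le>k. c (m + (a + j * d)) = c (m + a)"
    using assms(1) unfolding has_mono_progression_def by blast
  then show ?thesis
    unfolding has_mono_progression_def using assms(2)
    by (intro exI[of _ "m + a"] exI[of _ d]) (auto simp: add.assoc)
qed

lemma vdw_bound_0: "vdw_bound 0 C 2"
proof -
  have "has_mono_progression c 0 2" for c :: "nat \<Rightarrow> 'a"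
    unfolding has_mono_progression_def by (rule exI[of _ 0], rule exI[of _ 1]) simp
  then show ?thesis unfolding vdw_bound_def by blast
qed

lemma vdw_bound_card:
  assumes "finite C" and "vdw_bound k {..<card C} N"
  shows "vdw_bound k C N"
  unfolding vdw_bound_def
proof (intro allI impI)
  fix c :: "nat \<Rightarrow> 'a"
  assume c: "c ` {..<N} \<subseteq> C"
  obtain h where h: "bij_betw h C {0..<card C}"
    using ex_bij_betw_finite_nat[OF assms(1)] by blast
  have "(h \<circ> c) ` {..<N} \<subseteq> {..<card C}"
    using c bij_betw_apply[OF h] by auto
  then have "has_mono_progression (h \<circ> c) k N"
    using assms(2) unfolding vdw_bound_def by blast
  then obtain a d where ad: "0 < d" "d < N" "a + k * d < N"
      and mono: "\<forall>j\<le>k. h (c (a + j * d)) = h (c a)"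
    unfolding has_mono_progression_def by auto
  have "c (a + j * d) = c a" if "j \<le> k" for j
  proof (rule inj_onD[OF bij_betw_imp_inj_on[OF h]])
    have "a + j * d \<le> a + k * d" using that by simp
    then have "a + j * d < N" using ad(3) by linarith
    then show "c (a + j * d) \<in> C" "c a \<in> C" using c ad(3) by auto
  qed (use mono that in auto)
  then show "has_mono_progression c k N"
    unfolding has_mono_progression_def using ad by blast
qed

definition colour_focused ::
    "(nat \<Rightarrow> 'c) \<Rightarrow> nat \<Rightarrow> nat \<Rightarrow> nat \<Rightarrow> (nat \<Rightarrow> nat) \<Rightarrow> (nat \<Rightarrow> nat) \<Rightarrow> bool" where
  "colour_focused c k s f A D \<longleftrightarrow>
     (\<forall>i<s. 0 < D i \<and> A i + Suc k * D i = f \<and> (\<forall>j\<le>k. c (A i + j * D i) = c (A i))) \<and>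
     inj_on (\<lambda>i. c (A i)) {..<s}"

lemma colour_focused_hit:
  assumes "colour_focused c k s f A D" and "i < s" and "c f = c (A i)" and "f < N"
  shows "has_mono_progression c (Suc k) N"
proof -
  have D: "0 < D i" and focus: "A i + Suc k * D i = f"
    and mono: "\<forall>j\<le>k. c (A i + j * D i) = c (A i)"
    using assms(1,2) unfolding colour_focused_def by auto
  have "D i \<le> Suc k * D i" by simp
  then have "D i < N" using focus assms(4) by linarith
  moreover have "c (A i + j * D i) = c (A i)" if "j \<le> Suc k" for j
    using that mono focus assms(3) le_Suc_eq by auto
  ultimately show ?thesis
    unfolding has_mono_progression_def using D focus assms(4) by (intro exI[of _ "A i"] exI[of _ "D i"]) auto
qed

lemma colour_focused_full:
  assumes "colour_focused c k r f A D" and "c ` {..<N} \<subseteq> {..<r}" and "f < N"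
  shows "has_mono_progression c (Suc k) N"
proof -
  have "A i < N" if "i < r" for i
    using assms(1,3) that unfolding colour_focused_def by (metis le_add1 le_less_trans)
  then have "(\<lambda>i. c (A i)) ` {..<r} \<subseteq> {..<r}" using assms(2) by blast
  then have "(\<lambda>i. c (A i)) ` {..<r} = {..<r}"
    using assms(1) unfolding colour_focused_def by (simp add: endo_inj_surj)
  moreover have "c f \<in> {..<r}" using assms(2,3) by blast
  ultimately obtain i where "i < r" "c f = c (A i)" by (metis imageE lessThan_iff)
  then show ?thesis using colour_focused_hit assms(1,3) by blast
qed

lemma colour_focused_extend:
  assumes foc: "colour_focused (\<lambda>i. c (m + i)) k s f A D"
    and new: "\<forall>i<s. c (m + f) \<noteq> c (m + A i)"
    and periodic: "\<forall>j\<le>k. \<forall>i\<le>f. c (m + j * E + i) = c (m + i)"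
    and "0 < E"
  shows "colour_focused c k (Suc s) (m + f + Suc k * E)
           (\<lambda>i. if i < s then m + A i else m + f) (\<lambda>i. if i < s then D i + E else E)"
proof -
  have old: "0 < D i" "A i + Suc k * D i = f" "\<forall>j\<le>k. c (m + (A i + j * D i)) = c (m + A i)"
    if "i < s" for i
    using foc that unfolding colour_focused_def by auto
  have "c (m + A i + j * (D i + E)) = c (m + A i)" if "i < s" "j \<le> k" for i j
  proof -
    have "j * D i \<le> Suc k * D i" using that(2) by (intro mult_le_mono1) simp
    then have "A i + j * D i \<le> f" using old(2)[OF that(1)] by linarith
    then have "c (m + j * E + (A i + j * D i)) = c (m + (A i + j * D i))"
      using periodic that(2) by blast
    then show ?thesis using old(3)[OF that(1)] that(2) by (simp add: algebra_simps)
  qed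
  moreover have "c (m + f + j * E) = c (m + f)" if "j \<le> k" for j
  proof -
    have "c (m + j * E + f) = c (m + f)" using periodic that by blast
    then show ?thesis by (simp add: ac_simps)
  qed
  moreover have "m + A i + Suc k * (D i + E) = m + f + Suc k * E" if "i < s" for i
    using old(2)[OF that] by (simp add: algebra_simps)
  moreover have "inj_on (\<lambda>i. c (m + A i)) {..<s}"
    using foc unfolding colour_focused_def by simp
  ultimately show ?thesis
    using old(1) \<open>0 < E\<close> new unfolding colour_focused_def lessThan_Suc
    by (auto simp: inj_on_def less_Suc_eq)
qed

lemma repeated_blocks:
  fixes r :: nat
  assumes vdw: "\<forall>q::nat. \<exists>L. vdw_bound k {..<q} L"
  obtains L where "\<forall>c. c ` {..<w * L} \<subseteq> {..<r} \<longrightarrow> (\<exists>b e. 0 < e \<and> e < L \<and> b + k * e < L \<and>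
                     (\<forall>j\<le>k. \<forall>i<w. c (w * (b + j * e) + i) = c (w * b + i)))"
proof -
  define C where "C = {xs. set xs \<subseteq> {..<r} \<and> length xs = w}"
  have "finite C" unfolding C_def by (simp add: finite_lists_length_eq)
  moreover obtain L where "vdw_bound k {..<card C} L"
    using vdw by blast
  ultimately have L: "vdw_bound k C L"
    by (rule vdw_bound_card)
  have "\<exists>b e. 0 < e \<and> e < L \<and> b + k * e < L \<and> (\<forall>j\<le>k. \<forall>i<w. c (w * (b + j * e) + i) = c (w * b + i))"
    if c: "c ` {..<w * L} \<subseteq> {..<r}" for c
  proof -
    define blk where "blk b = map (\<lambda>i. c (w * b + i)) [0..<w]" for b
    have "c (w * b + i) < r" if "b < L" "i < w" for b i
    proof -
      have "w * b + i < w * Suc b" using that(2) by simp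
      also have "\<dots> \<le> w * L" using that(1) by (intro mult_le_mono2) simp
      finally show ?thesis using c by auto
    qed
    then have "blk ` {..<L} \<subseteq> C" unfolding C_def blk_def by auto
    then have "has_mono_progression blk k L"
      using L unfolding vdw_bound_def by blast
    then obtain b e where "0 < e" "e < L" "b + k * e < L" "\<forall>j\<le>k. blk (b + j * e) = blk b"
      unfolding has_mono_progression_def by blast
    then show ?thesis unfolding blk_def by (intro exI[of _ b] exI[of _ e]) auto
  qed
  then show ?thesis using that by blast
qed

definition focus_bound :: "nat \<Rightarrow> nat \<Rightarrow> nat \<Rightarrow> nat \<Rightarrow> bool" where
  "focus_bound k r s M \<longleftrightarrow> (\<forall>c. c ` {..<M} \<subseteq> {..<r} \<longrightarrow>
     has_mono_progression c (Suc k) M \<or> (\<exists>f A D. f < M \<and> colour_focused c k s f A D))"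

lemma focus_bound_0: "focus_bound k r 0 1"
  unfolding focus_bound_def colour_focused_def by auto

lemma focus_bound_pos: "focus_bound k r s M \<Longrightarrow> 0 < M"
  unfolding focus_bound_def has_mono_progression_def by fastforce

lemma focus_bound_step_in_block:
  assumes M: "focus_bound k r s M" and c: "c ` {..<N} \<subseteq> {..<r}"
    and periodic: "\<forall>j\<le>k. \<forall>i<M. c (m + j * E + i) = c (m + i)" and "0 < E"
    and room: "m + M + Suc k * E \<le> N"
  shows "has_mono_progression c (Suc k) N \<or> (\<exists>f A D. f < N \<and> colour_focused c k (Suc s) f A D)"
proof -
  have mM: "m + M \<le> N" using room by linarith
  then have block: "(\<lambda>i. c (m + i)) ` {..<M} \<subseteq> {..<r}"
    using c by (auto simp: image_subset_iff)
  consider "has_mono_progression (\<lambda>i. c (m + i)) (Suc k) M"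
    | f A D where "f < M" "colour_focused (\<lambda>i. c (m + i)) k s f A D"
    using M[unfolded focus_bound_def, rule_format, OF block] by blast
  then show ?thesis
  proof cases
    case 1
    then show ?thesis using has_mono_progression_shift mM by blast
  next
    case (2 f A D)
    show ?thesis
    proof (cases "\<exists>i<s. c (m + f) = c (m + A i)")
      case True
      then obtain i where "i < s" "c (m + f) = c (m + A i)" by blast
      then have "has_mono_progression (\<lambda>i. c (m + i)) (Suc k) M"
        using colour_focused_hit[OF 2(2)] 2(1) by simp
      then show ?thesis using has_mono_progression_shift mM by blast
    next
      case False
      have "\<forall>j\<le>k. \<forall>i\<le>f. c (m + j * E + i) = c (m + i)"
        using periodic 2(1) by auto
      then have "colour_focused c k (Suc s) (m + f + Suc k * E)
          (\<lambda>i. if i < s then m + A i else m + f) (\<lambda>i. if i < s then D i + E else E)"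
        using colour_focused_extend[OF 2(2)] False \<open>0 < E\<close> by simp
      moreover have "m + f + Suc k * E < N" using room 2(1) by linarith
      ultimately show ?thesis by blast
    qed
  qed
qed

(* Cut {..<N} into blocks of length 2 M and find k + 1 equally spaced blocks with identical
   colour patterns. Shifting the focused family of the first block along them and adding its
   focus as a new progression gives a focused family of size s + 1. *)
lemma focus_bound_Suc:
  assumes vdw: "\<forall>q::nat. \<exists>L. vdw_bound k {..<q} L" and M: "focus_bound k r s M"
  shows "\<exists>N. focus_bound k r (Suc s) N"
proof -
  obtain L where L: "\<forall>c. c ` {..<2 * M * L} \<subseteq> {..<r} \<longrightarrow> (\<exists>b e. 0 < e \<and> e < L \<and> b + k * e < L \<and>
                     (\<forall>j\<le>k. \<forall>i<2 * M. c (2 * M * (b + j * e) + i) = c (2 * M * b + i)))"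
    by (rule repeated_blocks[OF vdw])
  define N where "N = 2 * M * (2 * L)"
  have "has_mono_progression c (Suc k) N \<or> (\<exists>f A D. f < N \<and> colour_focused c k (Suc s) f A D)"
    if c: "c ` {..<N} \<subseteq> {..<r}" for c
  proof -
    have "{..<2 * M * L} \<subseteq> {..<N}" unfolding N_def by simp
    then have "c ` {..<2 * M * L} \<subseteq> {..<r}" using c by (meson image_mono order_trans)
    then obtain b e where e: "0 < e" "e < L" "b + k * e < L"
      and blocks: "\<forall>j\<le>k. \<forall>i<2 * M. c (2 * M * (b + j * e) + i) = c (2 * M * b + i)"
      using L by blast
    have periodic: "\<forall>j\<le>k. \<forall>i<M. c (2 * M * b + j * (2 * M * e) + i) = c (2 * M * b + i)"
    proof (intro allI impI)
      fix j i assume "j \<le> k" "i < M"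
      have "2 * M * b + j * (2 * M * e) + i = 2 * M * (b + j * e) + i" by (simp add: algebra_simps)
      then show "c (2 * M * b + j * (2 * M * e) + i) = c (2 * M * b + i)"
        using blocks \<open>j \<le> k\<close> \<open>i < M\<close> by simp
    qed
    have "0 < 2 * M * e" using focus_bound_pos[OF M] e(1) by simp
    have "2 * M * b + M + Suc k * (2 * M * e) \<le> 2 * M * (b + Suc k * e + 1)"
      by (simp add: algebra_simps)
    also have "\<dots> \<le> N" unfolding N_def using e(2,3) by (intro mult_le_mono2) simp
    finally show ?thesis
      using focus_bound_step_in_block[OF M c periodic \<open>0 < 2 * M * e\<close>] by blast
  qed
  then show ?thesis unfolding focus_bound_def by blast
qed

lemma focus_bound_exists:
  assumes "\<forall>q::nat. \<exists>L. vdw_bound k {..<q} L"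
  shows "\<exists>M. focus_bound k r s M"
proof (induction s)
  case 0
  show ?case using focus_bound_0 by blast
next
  case (Suc s)
  then show ?case using focus_bound_Suc[OF assms] by blast
qed

lemma vdw_bound_exists: "\<exists>N. vdw_bound k {..<r::nat} N"
proof (induction k arbitrary: r)
  case 0
  show ?case using vdw_bound_0 by blast
next
  case (Suc k)
  then obtain M where M: "focus_bound k r r M"
    using focus_bound_exists by blast
  have "has_mono_progression c (Suc k) M" if "c ` {..<M} \<subseteq> {..<r}" for c
    using M that colour_focused_full[OF _ that] unfolding focus_bound_def by blast
  then show ?case unfolding vdw_bound_def by blast
qed

theorem van_der_waerden:
  assumes "finite C"
  obtains N where "vdw_bound k C N"
  using vdw_bound_card[OF assms] vdw_bound_exists by blast

section \<open>Progressions in relatively dense rigid sets\<close>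

lemma progression_with_close_values:
  fixes x :: "nat \<Rightarrow> 'a::metric_space"
  assumes "compact S" and "range x \<subseteq> S" and "\<epsilon> > 0"
  obtains a d where "0 < d" and "\<forall>i\<le>n. \<forall>j\<le>n. dist (x (a + i * d)) (x (a + j * d)) < \<epsilon>"
proof -
  obtain F where "finite F" and cover: "S \<subseteq> (\<Union>c\<in>F. ball c (\<epsilon> / 2))"
    using seq_compact_imp_totally_bounded[OF compact_imp_seq_compact[OF assms(1)]] assms(3)
    by (meson half_gt_zero)
  have "\<forall>i. \<exists>c. c \<in> F \<and> dist c (x i) < \<epsilon> / 2"
    using cover assms(2) by (fastforce simp: mem_ball)
  then obtain col where col: "\<And>i. col i \<in> F" "\<And>i. dist (col i) (x i) < \<epsilon> / 2"
    by metis
  obtain N where "vdw_bound n F N"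
    by (rule van_der_waerden[OF \<open>finite F\<close>])
  moreover have "col ` {..<N} \<subseteq> F" using col(1) by auto
  ultimately have "has_mono_progression col n N" unfolding vdw_bound_def by blast
  then obtain a d where "0 < d" and mono: "\<forall>j\<le>n. col (a + j * d) = col a"
    unfolding has_mono_progression_def by blast
  have "dist (x (a + i * d)) (x (a + j * d)) < \<epsilon>" if "i \<le> n" "j \<le> n" for i j
  proof -
    have "dist (x (a + i * d)) (x (a + j * d)) \<le> dist (col a) (x (a + i * d)) + dist (col a) (x (a + j * d))"
      by (rule dist_triangle3)
    also have "\<dots> < \<epsilon> / 2 + \<epsilon> / 2"
      using col(2)[of "a + i * d"] col(2)[of "a + j * d"] mono that by (intro add_strict_mono) auto
    finally show ?thesis by simp
  qed
  then show ?thesis using that \<open>0 < d\<close> by blast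
qed

definition relatively_dense :: "real \<Rightarrow> 'a::metric_space set \<Rightarrow> bool" where
  "relatively_dense R Y \<longleftrightarrow> (\<forall>w. \<exists>y\<in>Y. dist y w < R)"

definition difference_rigid :: "real \<Rightarrow> 'a::real_normed_vector set \<Rightarrow> bool" where
  "difference_rigid r Y \<longleftrightarrow>
     (\<forall>a\<in>Y. \<forall>b\<in>Y. \<forall>c\<in>Y. \<forall>e\<in>Y. norm ((a - b) - (c - e)) < r \<longrightarrow> a - b = c - e)"

lemma difference_rigid_translate_subset:
  assumes "difference_rigid r D" and "(\<lambda>y. y + v) ` Y \<subseteq> D"
  shows "difference_rigid r Y"
  unfolding difference_rigid_def
proof (intro ballI impI)
  fix a b c e
  assume "a \<in> Y" "b \<in> Y" "c \<in> Y" "e \<in> Y" and small: "norm ((a - b) - (c - e)) < r"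
  then have "a + v \<in> D" "b + v \<in> D" "c + v \<in> D" "e + v \<in> D" using assms(2) by auto
  then have "(a + v) - (b + v) = (c + v) - (e + v)"
    using assms(1)[unfolded difference_rigid_def, rule_format, of "a + v" "b + v" "c + v" "e + v"] small
    by simp
  then show "a - b = c - e" by simp
qed

lemma meyer_set_difference_rigid:
  assumes "meyer_set D"
  obtains r where "r > 0" and "difference_rigid r D"
proof -
  obtain U where "open U" "0 \<in> U"
    and U: "{(a - b) - (c - e) | a b c e. a \<in> D \<and> b \<in> D \<and> c \<in> D \<and> e \<in> D} \<inter> U = {0}"
    using assms unfolding meyer_set_def by blast
  then obtain r where "r > 0" and ball: "ball 0 r \<subseteq> U"
    by (meson openE)
  have "difference_rigid r D"
    unfolding difference_rigid_def
  proof (intro ballI impI)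
    fix a b c e
    assume "a \<in> D" "b \<in> D" "c \<in> D" "e \<in> D" and "norm ((a - b) - (c - e)) < r"
    then have "(a - b) - (c - e) \<in> {(a - b) - (c - e) | a b c e. a \<in> D \<and> b \<in> D \<and> c \<in> D \<and> e \<in> D} \<inter> U"
      using ball by (auto simp: dist_norm)
    then show "a - b = c - e" using U by simp
  qed
  then show ?thesis using that \<open>r > 0\<close> by blast
qed

lemma rigid_progression:
  assumes rigid: "difference_rigid r Y" and inY: "\<forall>j\<le>n. q j \<in> Y"
    and close: "\<forall>i\<le>n. \<forall>j\<le>n. norm ((q i - real i *\<^sub>R w) - (q j - real j *\<^sub>R w)) < r / 2"
    and "j \<le> n"
  shows "q j = q 0 + real j *\<^sub>R (q 1 - q 0)"
  using \<open>j \<le> n\<close>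
proof (induction j)
  case 0
  then show ?case by simp
next
  case (Suc j)
  define err where "err i = q i - real i *\<^sub>R w" for i
  have "(q (Suc j) - q j) - (q 1 - q 0) = (err (Suc j) - err j) - (err 1 - err 0)"
    unfolding err_def by (simp add: algebra_simps)
  then have "norm ((q (Suc j) - q j) - (q 1 - q 0)) \<le> norm (err (Suc j) - err j) + norm (err 1 - err 0)"
    by (simp only: norm_triangle_ineq4)
  also have "\<dots> < r / 2 + r / 2"
  proof (rule add_strict_mono)
    show "norm (err (Suc j) - err j) < r / 2"
      using close[rule_format, of "Suc j" j] Suc.prems unfolding err_def by simp
    show "norm (err 1 - err 0) < r / 2" using close[rule_format, of 1 0] Suc.prems unfolding err_def by simp
  qed
  finally have "q (Suc j) - q j = q 1 - q 0"
    using inY Suc.prems by (intro rigid[unfolded difference_rigid_def, rule_format]) auto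
  then show ?case using Suc by (simp add: algebra_simps)
qed

lemma unit_direction_close:
  fixes z u :: "'a::real_normed_vector"
  assumes u: "norm u = 1" and close: "norm (z - s *\<^sub>R u) < s"
  shows "z \<noteq> 0" and "norm (z /\<^sub>R norm z - u) \<le> 2 * norm (z - s *\<^sub>R u) / s"
proof -
  have "s > 0" using close norm_ge_zero by (metis le_less_trans)
  show "z \<noteq> 0"
  proof
    assume "z = 0"
    then show False using close u \<open>s > 0\<close> by simp
  qed
  then have "norm z > 0" by simp
  have "norm (z /\<^sub>R norm z - z /\<^sub>R s) = \<bar>inverse (norm z) - inverse s\<bar> * norm z"
    by (simp add: scaleR_diff_left[symmetric])
  also have "\<dots> = \<bar>(inverse (norm z) - inverse s) * norm z\<bar>"
    by (simp add: abs_mult)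
  also have "(inverse (norm z) - inverse s) * norm z = (s - norm z) / s"
    using \<open>norm z > 0\<close> \<open>s > 0\<close> by (simp add: field_simps)
  also have "\<bar>(s - norm z) / s\<bar> = \<bar>s - norm z\<bar> / s"
    using \<open>s > 0\<close> by simp
  also have "\<dots> \<le> norm (z - s *\<^sub>R u) / s"
    using norm_triangle_ineq3[of z "s *\<^sub>R u"] u \<open>s > 0\<close> by (simp add: divide_right_mono abs_minus_commute)
  finally have first: "norm (z /\<^sub>R norm z - z /\<^sub>R s) \<le> norm (z - s *\<^sub>R u) / s" .
  have "z /\<^sub>R s - u = (z - s *\<^sub>R u) /\<^sub>R s"
    using \<open>s > 0\<close> by (simp add: algebra_simps)
  then have second: "norm (z /\<^sub>R s - u) = norm (z - s *\<^sub>R u) / s"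
    using \<open>s > 0\<close> by (simp add: divide_inverse_commute)
  show "norm (z /\<^sub>R norm z - u) \<le> 2 * norm (z - s *\<^sub>R u) / s"
    using norm_diff_triangle_le[OF first second[THEN eq_refl]] by simp
qed

lemma relatively_dense_rigid_progression_near_multiple:
  fixes Y :: "'a::euclidean_space set"
  assumes dense: "relatively_dense R Y" and rigid: "difference_rigid r Y" and "r > 0"
  obtains y z and d :: nat where "0 < d" and "\<forall>k\<le>n. y + real k *\<^sub>R z \<in> Y"
    and "norm (z - real d *\<^sub>R v) < r / 4"
proof -
  have "\<forall>i::nat. \<exists>y. y \<in> Y \<and> dist y (real i *\<^sub>R v) < R"
    using dense unfolding relatively_dense_def by blast
  then obtain p where p: "\<And>i. p i \<in> Y" "\<And>i. dist (p i) (real i *\<^sub>R v) < R"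
    by (metis choice)
  define err where "err i = p i - real i *\<^sub>R v" for i
  have "range err \<subseteq> cball 0 R"
    using p(2) unfolding err_def by (auto simp: dist_norm norm_minus_commute less_imp_le)
  moreover have "r / 4 > 0" using \<open>r > 0\<close> by simp
  \<comment> \<open>Progressions of length \<open>n + 2\<close>, so that the step \<open>q 1 - q 0\<close> is controlled even for \<open>n = 0\<close>.\<close>
  ultimately obtain a d where "0 < d"
    and err_close: "\<forall>i\<le>Suc n. \<forall>j\<le>Suc n. dist (err (a + i * d)) (err (a + j * d)) < r / 4"
    by (rule progression_with_close_values[OF compact_cball])
  define q where "q j = p (a + j * d)" for j
  have q_err: "q j - real j *\<^sub>R real d *\<^sub>R v = err (a + j * d) + real a *\<^sub>R v" for j
    unfolding q_def err_def by (simp add: algebra_simps)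
  have "norm ((q i - real i *\<^sub>R real d *\<^sub>R v) - (q j - real j *\<^sub>R real d *\<^sub>R v)) < r / 2"
    if "i \<le> Suc n" "j \<le> Suc n" for i j
    using err_close[rule_format, OF that] \<open>r > 0\<close> unfolding q_err by (simp add: dist_norm)
  moreover have "\<forall>j\<le>Suc n. q j \<in> Y" using p(1) unfolding q_def by simp
  ultimately have q_ap: "q j = q 0 + real j *\<^sub>R (q 1 - q 0)" if "j \<le> Suc n" for j
    using rigid_progression[OF rigid _ _ that] by blast
  have "(q 1 - q 0) - real d *\<^sub>R v = err (a + d) - err a"
    using q_err[of 1] q_err[of 0] by (simp add: algebra_simps)
  then have "norm ((q 1 - q 0) - real d *\<^sub>R v) < r / 4"
    using err_close[rule_format, of 1 0] by (simp add: dist_norm)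
  moreover have "\<forall>k\<le>n. q 0 + real k *\<^sub>R (q 1 - q 0) \<in> Y"
    using q_ap p(1) unfolding q_def by (metis le_SucI)
  ultimately show ?thesis using that \<open>0 < d\<close> by blast
qed

lemma relatively_dense_rigid_progression:
  fixes Y :: "'a::euclidean_space set"
  assumes dense: "relatively_dense R Y" and rigid: "difference_rigid r Y" and "r > 0"
    and u: "norm u = 1" and "\<delta> > 0"
  obtains y z where "z \<noteq> 0" and "\<forall>k\<le>n. y + real k *\<^sub>R z \<in> Y" and "norm (z /\<^sub>R norm z - u) < \<delta>"
proof -
  define L where "L = r / \<delta> + r"
  have "r / \<delta> > 0" "r * \<delta> > 0" using \<open>r > 0\<close> \<open>\<delta> > 0\<close> by simp_all
  then have "r / 4 < L" unfolding L_def using \<open>r > 0\<close> by linarith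
  have "L * \<delta> = r + r * \<delta>" unfolding L_def using \<open>\<delta> > 0\<close> by (simp add: field_simps)
  then have "r / 2 < L * \<delta>" using \<open>r * \<delta> > 0\<close> \<open>r > 0\<close> by linarith
  obtain y z d where "0 < d" and Y: "\<forall>k\<le>n. y + real k *\<^sub>R z \<in> Y"
    and near: "norm (z - real d *\<^sub>R L *\<^sub>R u) < r / 4"
    by (rule relatively_dense_rigid_progression_near_multiple[OF dense rigid \<open>r > 0\<close>])
  define s where "s = real d * L"
  have zs: "norm (z - s *\<^sub>R u) < r / 4" using near unfolding s_def by simp
  have "L \<le> s" unfolding s_def using \<open>0 < d\<close> \<open>r / 4 < L\<close> \<open>r > 0\<close> by simp
  then have "L > 0" "s > 0" "norm (z - s *\<^sub>R u) < s" using zs \<open>r / 4 < L\<close> \<open>r > 0\<close> by linarith+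
  note direction = unit_direction_close[OF u \<open>norm (z - s *\<^sub>R u) < s\<close>]
  have "2 * norm (z - s *\<^sub>R u) / s < 2 * (r / 4) / s"
    using zs \<open>s > 0\<close> by (intro divide_strict_right_mono) simp_all
  also have "\<dots> \<le> 2 * (r / 4) / L"
    using \<open>L \<le> s\<close> \<open>L > 0\<close> \<open>r > 0\<close> by (intro divide_left_mono) simp_all
  also have "\<dots> < \<delta>" using \<open>r / 2 < L * \<delta>\<close> \<open>L > 0\<close> by (simp add: field_simps)
  finally have "norm (z /\<^sub>R norm z - u) < \<delta>" using direction(2) by linarith
  then show ?thesis using that direction(1) Y by blast
qed

section \<open>Placements of a patch in a tiling\<close>

lemma tile_transl_add: "tile_transl (tile_transl t a) b = tile_transl t (a + b)"
  unfolding tile_transl_def by (simp add: image_image add.assoc)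

lemma patch_transl_add: "patch_transl (patch_transl P a) b = patch_transl P (a + b)"
  unfolding patch_transl_def by (simp add: image_image tile_transl_add)

lemma patch_transl_UN: "patch_transl (\<Union>k\<in>K. Q k) y = (\<Union>k\<in>K. patch_transl (Q k) y)"
  unfolding patch_transl_def by (rule image_UN)

lemma supp_tile_transl: "supp (tile_transl t x) = (\<lambda>k. k + x) ` supp t"
  unfolding supp_def tile_transl_def by simp

lemma patch_supp_transl: "patch_supp (patch_transl P x) = (\<lambda>k. k + x) ` patch_supp P"
  unfolding patch_supp_def patch_transl_def by (auto simp: supp_tile_transl)

definition placements :: "('a::euclidean_space, 'l) tile set \<Rightarrow> ('a, 'l) tile set \<Rightarrow> 'a set" where
  "placements T P = {y. patch_transl P y \<subseteq> T}"

lemma legal_iff_placements: "legal T P \<longleftrightarrow> placements T P \<noteq> {}"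
  unfolding legal_def placements_def by blast

lemma placements_relatively_dense:
  assumes "repetitive T" and "finite P" and "legal T P" and "q \<in> patch_supp P"
  obtains R where "relatively_dense R (placements T P)"
proof -
  obtain R where R: "\<forall>c. \<exists>x. patch_transl P x \<subseteq> T \<and> patch_supp (patch_transl P x) \<subseteq> ball c R"
    using assms(1-3) unfolding repetitive_def by blast
  have "\<exists>y\<in>placements T P. dist y w < R" for w
  proof -
    obtain x where x: "patch_transl P x \<subseteq> T" "patch_supp (patch_transl P x) \<subseteq> ball (w + q) R"
      using R by blast
    have "q + x \<in> ball (w + q) R"
      using x(2) assms(4) unfolding patch_supp_transl by blast
    then have "dist x w < R" by (simp add: dist_norm norm_minus_commute)
    moreover have "x \<in> placements T P" using x(1) unfolding placements_def by simp
    ultimately show ?thesis by blast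
  qed
  then show ?thesis using that unfolding relatively_dense_def by blast
qed

lemma meyer_property_supp_nonempty: "meyer_property T \<Longrightarrow> t \<in> T \<Longrightarrow> supp t \<noteq> {}"
  unfolding meyer_property_def by blast

lemma placements_difference_rigid:
  assumes "meyer_property T" and "t0 \<in> P" and "y0 \<in> placements T P"
  obtains r where "r > 0" and "difference_rigid r (placements T P)"
proof -
  obtain c where c: "\<forall>t\<in>T. \<forall>t'\<in>T. \<forall>y. t' = tile_transl t y \<longrightarrow> c t' = c t + y"
    and meyer: "meyer_set (c ` T)"
    using assms(1) unfolding meyer_property_def by blast
  obtain r where "r > 0" and rigid: "difference_rigid r (c ` T)"
    using meyer_set_difference_rigid[OF meyer] by blast
  have tile: "tile_transl t0 y \<in> T" if "y \<in> placements T P" for y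
    using that assms(2) unfolding placements_def patch_transl_def by auto
  define v where "v = c (tile_transl t0 y0) - y0"
  have "(\<lambda>y. y + v) ` placements T P \<subseteq> c ` T"
  proof (rule image_subsetI)
    fix y assume y: "y \<in> placements T P"
    have "tile_transl t0 y = tile_transl (tile_transl t0 y0) (y - y0)"
      by (simp add: tile_transl_add)
    then have "c (tile_transl t0 y) = c (tile_transl t0 y0) + (y - y0)"
      using c tile[OF y] tile[OF assms(3)] by blast
    then have "y + v = c (tile_transl t0 y)" unfolding v_def by simp
    then show "y + v \<in> c ` T" using tile[OF y] by blast
  qed
  then show ?thesis using that \<open>r > 0\<close> difference_rigid_translate_subset[OF rigid] by blast
qed

lemma legal_progression_union:
  assumes "\<forall>k\<le>n. y + real k *\<^sub>R z \<in> placements T P"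
  shows "legal T (\<Union>k\<in>{1..n}. patch_transl P (real k *\<^sub>R z))"
proof -
  have "patch_transl (\<Union>k\<in>{1..n}. patch_transl P (real k *\<^sub>R z)) y
      = (\<Union>k\<in>{1..n}. patch_transl P (y + real k *\<^sub>R z))"
    by (simp add: patch_transl_UN patch_transl_add add.commute)
  also have "\<dots> \<subseteq> T" using assms unfolding placements_def by auto
  finally show ?thesis unfolding legal_def by blast
qed

lemma legal_progression_in_direction:
  fixes T :: "('a::euclidean_space, 'l) tile set"
  assumes "repetitive T" and "meyer_property T" and "finite P" and "legal T P"
    and "norm u = 1" and "\<delta> > 0"
  obtains z where "z \<noteq> 0" and "legal T (\<Union>k\<in>{1..n}. patch_transl P (real k *\<^sub>R z))"
    and "norm (z /\<^sub>R norm z - u) < \<delta>"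
proof (cases "P = {}")
  case True
  then have "legal T (\<Union>k\<in>{1..n}. patch_transl P (real k *\<^sub>R u))"
    unfolding legal_def patch_transl_def by simp
  moreover have "u \<noteq> 0" using assms(5) by auto
  ultimately show ?thesis using that[of u] assms(5,6) by simp
next
  case False
  then obtain t0 where "t0 \<in> P" by blast
  obtain y0 where y0: "y0 \<in> placements T P" using assms(4) legal_iff_placements by blast
  then have "tile_transl t0 y0 \<in> T" using \<open>t0 \<in> P\<close> unfolding placements_def patch_transl_def by auto
  then have "supp t0 \<noteq> {}" using meyer_property_supp_nonempty[OF assms(2)] supp_tile_transl by fastforce
  then obtain q where "q \<in> patch_supp P" using \<open>t0 \<in> P\<close> unfolding patch_supp_def by blast
  obtain R where dense: "relatively_dense R (placements T P)"
    using placements_relatively_dense[OF assms(1,3,4) \<open>q \<in> patch_supp P\<close>] by blast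
  obtain r where "r > 0" and rigid: "difference_rigid r (placements T P)"
    using placements_difference_rigid[OF assms(2) \<open>t0 \<in> P\<close> y0] by blast
  obtain y z where "z \<noteq> 0" and "\<forall>k\<le>n. y + real k *\<^sub>R z \<in> placements T P"
    and "norm (z /\<^sub>R norm z - u) < \<delta>"
    by (rule relatively_dense_rigid_progression[OF dense rigid \<open>r > 0\<close> assms(5,6)])
  then show ?thesis using that legal_progression_union by metis
qed

theorem corollary2p11:
  fixes T :: "('a::euclidean_space, 'l) tile set"
  assumes "is_tiling T" and "repetitive T" and "FLC T" and "meyer_property T"
  shows "(\<forall>P (n::nat). finite P \<and> legal T P \<and> n > 0 \<longrightarrow>
            (\<exists>z. z \<noteq> 0 \<and> legal T (\<Union>k\<in>{1..n}. patch_transl P (real k *\<^sub>R z))))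
       \<and> (\<forall>P (n::nat) u (\<delta>::real). finite P \<and> legal T P \<and> n > 0 \<and> norm u = 1 \<and> \<delta> > 0 \<longrightarrow>
            (\<exists>z. z \<noteq> 0 \<and> legal T (\<Union>k\<in>{1..n}. patch_transl P (real k *\<^sub>R z)) \<and>
                 norm (z /\<^sub>R norm z - u) < \<delta>))"
proof (intro conjI allI impI)
  fix P and n :: nat and u :: 'a and \<delta> :: real
  assume "finite P \<and> legal T P \<and> n > 0 \<and> norm u = 1 \<and> \<delta> > 0"
  then have "finite P" "legal T P" "norm u = 1" "\<delta> > 0" by simp_all
  from legal_progression_in_direction[OF assms(2,4) this]
  show "\<exists>z. z \<noteq> 0 \<and> legal T (\<Union>k\<in>{1..n}. patch_transl P (real k *\<^sub>R z)) \<and>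
               norm (z /\<^sub>R norm z - u) < \<delta>" by metis
next
  fix P and n :: nat
  assume "finite P \<and> legal T P \<and> n > 0"
  then have "finite P" "legal T P" by simp_all
  obtain b :: 'a where "b \<in> Basis" using nonempty_Basis by blast
  then have "norm b = 1" by simp
  from legal_progression_in_direction[OF assms(2,4) \<open>finite P\<close> \<open>legal T P\<close> this zero_less_one]
  show "\<exists>z. z \<noteq> 0 \<and> legal T (\<Union>k\<in>{1..n}. patch_transl P (real k *\<^sub>R z))" by metis
qed

end
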